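(* Let $\zeta_5=e^{2\pi i/5}$, let $A=\theta[1;\tfrac15]$ and $B=\theta[1;\tfrac35]$ (theta constants, functions of $\tau$), and for $k\in\{1,3,5,7,9\}$ let $f_k=\theta[\tfrac15;\tfrac k5](\zeta,\tau)$. Then for every $(\zeta,\tau)\in\mathbb{C}\times\mathbb{H}^2$: $$B^2f_1f_9-A^2f_3f_7+ABf_5^2=0,$$ $$\zeta_5^2A^2f_3f_9-\zeta_5^2B^2f_5f_7+ABf_1^2=0,$$ $$B^2f_1f_3+\zeta_5^2A^2f_5f_9-\zeta_5^2ABf_7^2=0,$$ $$A^2f_1f_5+\zeta_5^2B^2f_7f_9-ABf_3^2=0,$$ $$A^2f_1f_7-B^2f_3f_5+\zeta_5^2ABf_9^2=0.$$
   Context: Let $\mathbb{H}^2=\{\tau\in\mathbb{C}:\Im\tau>0\}$. For $(\epsilon,\epsilon')\in\mathbb{R}^2$, $$\theta[\epsilon;\epsilon'](\zeta,\tau)=\sum_{n\in\mathbb{Z}}\exp\Big(2\pi i\Big[\tfrac12\big(n+\tfrac{\epsilon}{2}\big)^2\tau+\big(n+\tfrac{\epsilon}{2}\big)\big(\zeta+\tfrac{\epsilon'}{2}\big)\Big]\Big),$$ and $\theta[\epsilon;\epsilon']=\theta[\epsilon;\epsilon'](0,\tau)$ denotes the theta constant. *)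

theory Defs
  imports "HOL-Analysis.Analysis"
begin

definition theta_char :: "real \<Rightarrow> real \<Rightarrow> complex \<Rightarrow> complex \<Rightarrow> complex" where
  "theta_char e e' z t = (\<Sum>\<^sub>\<infinity>n::int.
     exp (2 * pi * \<i> * ((1/2) * (of_int n + of_real e / 2)^2 * t
                        + (of_int n + of_real e / 2) * (z + of_real e' / 2))))"

definition theta_const :: "real \<Rightarrow> real \<Rightarrow> complex \<Rightarrow> complex" where
  "theta_const e e' t = theta_char e e' 0 t"

end

theory Submission
  imports Defs
begin

text \<open>
  Write \<open>\<theta>[\<epsilon>;\<epsilon>'](\<zeta>,\<tau>) = \<Sum>\<^sub>n exp(2\<pi>i((n+c)\<^sup>2\<tau>/2 + (n+c)x))\<close> with
  \<open>c = \<epsilon>/2\<close> and \<open>x = \<zeta> + \<epsilon>'/2\<close>. Splitting \<open>\<int>\<^sup>2\<close> by the parity of \<open>n + m\<close> and substituting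
  \<open>(n, m) = (k + l + p, k - l)\<close> gives the addition formula, which writes a product of two
  such series as a sum of two products of series with period \<open>2\<tau>\<close>. For the products
  \<open>A f\<^sub>k\<close> and \<open>B f\<^sub>k\<close> the characteristics that occur reduce, modulo \<open>\<int>\<close> and up to sign, to
  \<open>3/10\<close> and \<open>4/5\<close>; so with \<open>P j\<close>, \<open>Q j\<close> the period-\<open>2\<tau>\<close> series of these characteristics at
  \<open>\<zeta> + j/5\<close>, every product is \<open>P u Q v + Q u P v\<close>. Since \<open>P\<close> and \<open>Q\<close> only pick up the factors
  \<open>-w\<^sup>4\<close> and \<open>w\<^sup>4\<close> under \<open>j \<mapsto> j + 5\<close>, the five relations become polynomial identities in
  \<open>P j\<close>, \<open>Q j\<close> (\<open>-1 \<le> j \<le> 3\<close>) modulo \<open>w\<^sup>5 = 1\<close>.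
\<close>

lemma summable_on_power_abs_int:
  fixes x :: real
  assumes "0 \<le> x" "x < 1"
  shows "(\<lambda>n::int. x ^ nat \<bar>n\<bar>) summable_on UNIV"
proof -
  have nat: "(\<lambda>k::nat. x ^ k) summable_on UNIV"
    using assms by (subst summable_on_UNIV_nonneg_real_iff) (auto intro: summable_geometric)
  have pos: "(\<lambda>n::int. x ^ nat \<bar>n\<bar>) summable_on range int"
    using nat by (subst summable_on_reindex) (auto simp: o_def)
  have neg: "(\<lambda>n::int. x ^ nat \<bar>n\<bar>) summable_on range (\<lambda>k. - int k)"
    using nat by (subst summable_on_reindex) (auto simp: o_def inj_on_def)
  have UNIV_split: "(UNIV :: int set) = range int \<union> range (\<lambda>k. - int k)"
  proof (intro set_eqI iffI)
    fix n :: int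
    show "n \<in> range int \<union> range (\<lambda>k. - int k)"
    proof (cases "n \<ge> 0")
      case True
      then have "n = int (nat n)" by simp
      then show ?thesis by blast
    next
      case False
      then have "n = - int (nat (- n))" by simp
      then show ?thesis by blast
    qed
  qed auto
  show ?thesis
    by (subst UNIV_split) (rule summable_on_union[OF pos neg])
qed

lemma abs_ge_minus_const_quadratic:
  fixes a b u :: real
  assumes "a > 0"
  shows "a * u^2 + b * u \<ge> \<bar>u\<bar> - (\<bar>b\<bar> + 1)^2 / (4 * a)"
proof -
  define y where "y = \<bar>u\<bar>"
  define B where "B = \<bar>b\<bar> + 1"
  have "a * y^2 - B * y + B^2 / (4 * a) = (2 * a * y - B)^2 / (4 * a)"
    using assms by (simp add: power2_eq_square field_simps)
  then have "a * y^2 - B * y + B^2 / (4 * a) \<ge> 0"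
    using assms by simp
  moreover have "a * u^2 = a * y^2"
    by (simp add: y_def)
  moreover have "B * y = \<bar>b\<bar> * y + y"
    by (simp add: B_def distrib_right)
  moreover have "\<bar>b * u\<bar> = \<bar>b\<bar> * y"
    by (simp add: y_def abs_mult)
  ultimately show ?thesis
    unfolding y_def[symmetric] B_def[symmetric] by linarith
qed

lemma
  fixes f g :: "_ \<Rightarrow> 'b :: {banach, real_normed_div_algebra}"
  assumes f: "(\<lambda>x. norm (f x)) summable_on A" and g: "(\<lambda>y. norm (g y)) summable_on B"
  shows abs_summable_on_Times_mult: "(\<lambda>(x, y). norm (f x * g y)) summable_on A \<times> B"
    and infsum_mult_infsum: "infsum f A * infsum g B = (\<Sum>\<^sub>\<infinity>(x, y)\<in>A \<times> B. f x * g y)"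
proof -
  have "(\<lambda>x. norm (f x) * infsum (\<lambda>y. norm (g y)) B) summable_on A"
    using f by (rule summable_on_cmult_left)
  then have "(\<lambda>x. norm (infsum (\<lambda>y. norm (f x * g y)) B)) summable_on A"
    by (simp add: norm_mult infsum_cmult_right' infsum_nonneg)
  moreover have "(\<lambda>y. norm (f x * g y)) summable_on B" for x
    using summable_on_cmult_right[OF g, of "norm (f x)"] by (simp add: norm_mult)
  ultimately show summable: "(\<lambda>(x, y). norm (f x * g y)) summable_on A \<times> B"
    using Infinite_Sum.abs_summable_on_Sigma_iff[where f = "\<lambda>(x, y). f x * g y" and A = A and B = "\<lambda>_. B"]
    by (simp add: case_prod_unfold)
  have "(\<Sum>\<^sub>\<infinity>(x, y)\<in>A \<times> B. f x * g y) = (\<Sum>\<^sub>\<infinity>x\<in>A. \<Sum>\<^sub>\<infinity>y\<in>B. f x * g y)"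
    using infsum_Sigma'_banach[OF abs_summable_summable[of "\<lambda>(x, y). f x * g y"]] summable
    by (simp add: case_prod_unfold)
  also have "\<dots> = infsum f A * infsum g B"
    by (simp add: infsum_cmult_right' infsum_cmult_left')
  finally show "infsum f A * infsum g B = (\<Sum>\<^sub>\<infinity>(x, y)\<in>A \<times> B. f x * g y)" ..
qed

lemma infsum_reindex_parity:
  fixes F :: "int \<times> int \<Rightarrow> 'a :: {comm_monoid_add, t2_space}" and p :: int
  assumes "p \<in> {0, 1}"
  shows "(\<Sum>\<^sub>\<infinity>(k, l). F (k + l + p, k - l)) = infsum F {(n, m). (n + m) mod 2 = p}"
proof (rule infsum_reindex_bij_witness[where j = "\<lambda>(k, l). (k + l + p, k - l)"
      and i = "\<lambda>(n, m). ((n + m - p) div 2, (n - m - p) div 2)"])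
  fix a :: "int \<times> int"
  show "(\<lambda>(n, m). ((n + m - p) div 2, (n - m - p) div 2)) ((\<lambda>(k, l). (k + l + p, k - l)) a) = a"
    by (cases a) simp
  show "(\<lambda>(k, l). (k + l + p, k - l)) a \<in> {(n, m). (n + m) mod 2 = p}"
    using assms by (cases a) auto
  show "F ((\<lambda>(k, l). (k + l + p, k - l)) a) = (\<lambda>(k, l). F (k + l + p, k - l)) a"
    by (cases a) simp
next
  fix b :: "int \<times> int"
  assume "b \<in> {(n, m). (n + m) mod 2 = p}"
  moreover obtain n m where b: "b = (n, m)"
    by fastforce
  ultimately have even: "n + m - p = 2 * ((n + m) div 2)"
    by (simp add: minus_mod_eq_mult_div[symmetric])
  then have "(n + m - p) div 2 = (n + m) div 2" and "(n - m - p) div 2 = (n + m) div 2 - m"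
    by (simp_all add: algebra_simps)
  then show "(\<lambda>(k, l). (k + l + p, k - l)) ((\<lambda>(n, m). ((n + m - p) div 2, (n - m - p) div 2)) b) = b"
    using even unfolding b by simp
qed simp

definition theta_term :: "real \<Rightarrow> complex \<Rightarrow> complex \<Rightarrow> int \<Rightarrow> complex" where
  "theta_term c t x n =
     exp (2 * pi * \<i> * ((of_int n + of_real c)^2 * t / 2 + (of_int n + of_real c) * x))"

definition theta_series :: "real \<Rightarrow> complex \<Rightarrow> complex \<Rightarrow> complex" where
  "theta_series c t x = (\<Sum>\<^sub>\<infinity>n. theta_term c t x n)"

lemma theta_char_eq_theta_series:
  "theta_char e e' z t = theta_series (e / 2) t (z + of_real e' / 2)"
  unfolding theta_char_def theta_series_def theta_term_def
  by (rule infsum_cong, rule arg_cong[where f = exp]) (simp add: field_simps)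

lemma norm_theta_term:
  "norm (theta_term c t x n) = exp (- pi * Im t * (n + c)^2 - 2 * pi * Im x * (n + c))"
proof -
  define u where "u = real_of_int n + c"
  have u: "(of_int n + of_real c :: complex) = of_real u"
    by (simp add: u_def)
  have "Im ((of_real u)^2 * t / 2 + of_real u * x) = u^2 * Im t / 2 + u * Im x"
    by (simp flip: of_real_power)
  then have "Re (2 * pi * \<i> * ((of_real u)^2 * t / 2 + of_real u * x))
      = - pi * Im t * u^2 - 2 * pi * Im x * u"
    by (simp add: algebra_simps)
  then have "norm (theta_term c t x n) = exp (- pi * Im t * u^2 - 2 * pi * Im x * u)"
    unfolding theta_term_def norm_exp_eq_Re u by (simp only:)
  then show ?thesis
    by (simp only: u_def)
qed

lemma theta_term_abs_summable:
  assumes "Im t > 0"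
  shows "(\<lambda>n. norm (theta_term c t x n)) summable_on UNIV"
proof -
  define a where "a = pi * Im t"
  define b where "b = 2 * pi * Im x"
  define K where "K = (\<bar>b\<bar> + 1)^2 / (4 * a) + \<bar>c\<bar>"
  have "a > 0"
    using assms by (simp add: a_def)
  have bound: "norm (theta_term c t x n) \<le> exp K * exp (-1) ^ nat \<bar>n\<bar>" for n :: int
  proof -
    have "a * (n + c)^2 + b * (n + c) \<ge> \<bar>n + c\<bar> - (\<bar>b\<bar> + 1)^2 / (4 * a)"
      using \<open>a > 0\<close> by (rule abs_ge_minus_const_quadratic)
    then have "- a * (n + c)^2 - b * (n + c) \<le> K - \<bar>n\<bar>"
      unfolding K_def by linarith
    moreover have "exp (-1) ^ nat \<bar>n\<bar> = exp (- real_of_int \<bar>n\<bar>)"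
      by (simp add: exp_of_nat_mult[symmetric] del: exp_of_nat_mult)
    ultimately show ?thesis
      unfolding norm_theta_term a_def b_def by (simp flip: exp_add)
  qed
  have "(\<lambda>n::int. exp K * exp (-1) ^ nat \<bar>n\<bar>) summable_on UNIV"
    by (intro summable_on_cmult_right summable_on_power_abs_int) auto
  then show ?thesis
    by (rule Infinite_Sum.abs_summable_on_comparison_test') (rule bound)
qed

lemma theta_term_mult:
  "theta_term c1 t x (k + l + p) * theta_term c2 t y (k - l) =
   theta_term ((of_int p + c1 + c2) / 2) (2 * t) (x + y) k *
   theta_term ((of_int p + c1 - c2) / 2) (2 * t) (x - y) l"
  unfolding theta_term_def exp_add[symmetric]
  by (rule arg_cong[where f = exp]) (simp add: power2_eq_square field_simps)

lemma theta_series_mult: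
  assumes "Im t > 0"
  shows "theta_series c1 t x * theta_series c2 t y =
     theta_series ((c1 + c2) / 2) (2 * t) (x + y) * theta_series ((c1 - c2) / 2) (2 * t) (x - y) +
     theta_series ((1 + c1 + c2) / 2) (2 * t) (x + y) * theta_series ((1 + c1 - c2) / 2) (2 * t) (x - y)"
proof -
  define F where "F = (\<lambda>(n, m). theta_term c1 t x n * theta_term c2 t y m)"
  have "(\<lambda>q. norm (F q)) summable_on UNIV"
    using abs_summable_on_Times_mult[OF theta_term_abs_summable theta_term_abs_summable] assms
    by (simp add: F_def case_prod_unfold)
  then have F_summable: "F summable_on S" for S
    using abs_summable_summable summable_on_subset_banach by blast
  have product: "theta_series c t u * theta_series c' t' u' =
      (\<Sum>\<^sub>\<infinity>(n, m). theta_term c t u n * theta_term c' t' u' m)"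
    if "Im t > 0" "Im t' > 0" for c c' t t' u u'
    unfolding theta_series_def
    by (simp add: infsum_mult_infsum theta_term_abs_summable that)
  have parity_part: "theta_series ((of_int p + c1 + c2) / 2) (2 * t) (x + y) *
      theta_series ((of_int p + c1 - c2) / 2) (2 * t) (x - y) = infsum F {(n, m). (n + m) mod 2 = p}"
    if "p \<in> {0, 1}" for p :: int
  proof -
    have "theta_series ((of_int p + c1 + c2) / 2) (2 * t) (x + y) *
        theta_series ((of_int p + c1 - c2) / 2) (2 * t) (x - y) = (\<Sum>\<^sub>\<infinity>(k, l). F (k + l + p, k - l))"
      using assms by (simp add: product F_def theta_term_mult)
    also have "\<dots> = infsum F {(n, m). (n + m) mod 2 = p}"
      using that by (rule infsum_reindex_parity)
    finally show ?thesis .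
  qed
  have parity_split:
    "(UNIV :: (int \<times> int) set) = {(n, m). (n + m) mod 2 = 0} \<union> {(n, m). (n + m) mod 2 = 1}"
    by auto
  have "infsum F UNIV = infsum F {(n, m). (n + m) mod 2 = 0} + infsum F {(n, m). (n + m) mod 2 = 1}"
    by (subst parity_split, rule infsum_Un_disjoint[OF F_summable F_summable]) auto
  moreover have "theta_series c1 t x * theta_series c2 t y = infsum F UNIV"
    using assms by (simp add: product F_def)
  ultimately show ?thesis
    using parity_part[of 0] parity_part[of 1] by simp
qed

lemma theta_series_char_add_int: "theta_series (c + of_int k) t x = theta_series c t x"
  unfolding theta_series_def
  by (rule infsum_reindex_bij_witness[where j = "\<lambda>n. n + k" and i = "\<lambda>n. n - k"])
    (simp_all add: theta_term_def algebra_simps)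

lemma theta_series_uminus: "theta_series (- c) t (- x) = theta_series c t x"
  unfolding theta_series_def
  by (rule infsum_reindex_bij_witness[where j = uminus and i = uminus])
    (simp_all add: theta_term_def power2_eq_square algebra_simps)

lemma theta_series_arg_add_one:
  "theta_series c t (x + 1) = exp (2 * pi * \<i> * c) * theta_series c t x"
proof -
  have "theta_term c t (x + 1) n = exp (2 * pi * \<i> * c) * theta_term c t x n" for n
  proof -
    have "theta_term c t (x + 1) n = exp (2 * pi * \<i> * c) * theta_term c t x n * exp (2 * pi * \<i> * n)"
      unfolding theta_term_def exp_add[symmetric]
      by (rule arg_cong[where f = exp]) (simp add: algebra_simps)
    moreover have "exp (2 * pi * \<i> * n) = 1"
      using exp_integer_2pi[of "of_int n"] by (simp add: mult_ac)
    ultimately show ?thesis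
      by simp
  qed
  then have "theta_term c t (x + 1) = (\<lambda>n. exp (2 * pi * \<i> * c) * theta_term c t x n)"
    by (rule ext)
  then show ?thesis
    unfolding theta_series_def by (simp add: infsum_cmult_right')
qed

lemma theta_series_half_mult_tenth:
  assumes "Im t > 0"
  shows "theta_series (1/2) t a * theta_series (1/10) t x =
    theta_series (3/10) (2 * t) (x + a) * theta_series (4/5) (2 * t) (x - a) +
    theta_series (4/5) (2 * t) (x + a) * theta_series (3/10) (2 * t) (x - a)"
proof -
  have "theta_series (1/5) (2 * t) (a - x) = theta_series (4/5) (2 * t) (x - a)"
    using theta_series_uminus[of "1/5" "2 * t" "a - x"] theta_series_char_add_int[of "-1/5" 1] by simp
  moreover have "theta_series (7/10) (2 * t) (a - x) = theta_series (3/10) (2 * t) (x - a)"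
    using theta_series_uminus[of "7/10" "2 * t" "a - x"] theta_series_char_add_int[of "-7/10" 1] by simp
  ultimately show ?thesis
    using theta_series_mult[OF assms, of "1/2" a "1/10" x] by (simp add: add.commute)
qed

lemma exp_two_pi_i_div_5_pow_5: "exp (2 * pi * \<i> / 5) ^ 5 = 1"
  unfolding exp_of_nat_mult[symmetric] using exp_two_pi_i by (simp add: mult_ac)

lemma theta_series_four_fifths_arg_add_one:
  "theta_series (4/5) t (x + 1) = exp (2 * pi * \<i> / 5) ^ 4 * theta_series (4/5) t x"
proof -
  have "exp (2 * pi * \<i> * of_real (4/5)) = exp (2 * pi * \<i> / 5) ^ 4"
    unfolding exp_of_nat_mult[symmetric] by (simp add: field_simps)
  then show ?thesis
    by (simp only: theta_series_arg_add_one)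
qed

lemma theta_series_three_tenths_arg_add_one:
  "theta_series (3/10) t (x + 1) = - (exp (2 * pi * \<i> / 5) ^ 4) * theta_series (3/10) t x"
proof -
  have "exp (2 * pi * \<i> * of_real (3/10)) = exp (of_nat 4 * (2 * pi * \<i> / 5)) / exp (pi * \<i>)"
    unfolding exp_diff[symmetric] by (simp add: field_simps)
  also have "\<dots> = - (exp (2 * pi * \<i> / 5) ^ 4)"
    unfolding exp_of_nat_mult by simp
  finally show ?thesis
    by (simp only: theta_series_arg_add_one)
qed

lemma quadratic_relations_from_products:
  fixes A B w :: "'a :: idom" and f :: "nat \<Rightarrow> 'a" and P Q :: "int \<Rightarrow> 'a"
  assumes w5: "w ^ 5 = 1"
    and A_f: "\<And>m. A * f (2 * m + 1) = P (int m + 1) * Q (int m) + Q (int m + 1) * P (int m)"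
    and B_f: "\<And>m. B * f (2 * m + 1) = P (int m + 2) * Q (int m - 1) + Q (int m + 2) * P (int m - 1)"
    and P_shift: "\<And>j. P (j + 5) = - (w ^ 4) * P j"
    and Q_shift: "\<And>j. Q (j + 5) = w ^ 4 * Q j"
  shows "B^2 * f 1 * f 9 - A^2 * f 3 * f 7 + A * B * (f 5)^2 = 0 \<and>
         w^2 * A^2 * f 3 * f 9 - w^2 * B^2 * f 5 * f 7 + A * B * (f 1)^2 = 0 \<and>
         B^2 * f 1 * f 3 + w^2 * A^2 * f 5 * f 9 - w^2 * A * B * (f 7)^2 = 0 \<and>
         A^2 * f 1 * f 5 + w^2 * B^2 * f 7 * f 9 - A * B * (f 3)^2 = 0 \<and>
         A^2 * f 1 * f 7 - B^2 * f 3 * f 5 + w^2 * A * B * (f 9)^2 = 0"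
proof -
  have products:
    "A * f 1 = P 1 * Q 0 + Q 1 * P 0" "B * f 1 = P 2 * Q (-1) + Q 2 * P (-1)"
    "A * f 3 = P 2 * Q 1 + Q 2 * P 1" "B * f 3 = P 3 * Q 0 + Q 3 * P 0"
    "A * f 5 = P 3 * Q 2 + Q 3 * P 2" "B * f 5 = P 4 * Q 1 + Q 4 * P 1"
    "A * f 7 = P 4 * Q 3 + Q 4 * P 3" "B * f 7 = P 5 * Q 2 + Q 5 * P 2"
    "A * f 9 = P 5 * Q 4 + Q 5 * P 4" "B * f 9 = P 6 * Q 3 + Q 6 * P 3"
    using A_f[of 0] A_f[of 1] A_f[of 2] A_f[of 3] A_f[of 4]
      B_f[of 0] B_f[of 1] B_f[of 2] B_f[of 3] B_f[of 4] by simp_all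
  have shifts:
    "P 4 = - (w ^ 4) * P (-1)" "P 5 = - (w ^ 4) * P 0" "P 6 = - (w ^ 4) * P 1"
    "Q 4 = w ^ 4 * Q (-1)" "Q 5 = w ^ 4 * Q 0" "Q 6 = w ^ 4 * Q 1"
    using P_shift[of "-1"] P_shift[of 0] P_shift[of 1] Q_shift[of "-1"] Q_shift[of 0] Q_shift[of 1]
    by simp_all
  have "(B * f 1) * (B * f 9) - (A * f 3) * (A * f 7) + (A * f 5) * (B * f 5) = 0"
    unfolding products shifts by algebra
  moreover have "w^2 * (A * f 3) * (A * f 9) - w^2 * (B * f 5) * (B * f 7) + (A * f 1) * (B * f 1) = 0"
    unfolding products shifts using w5 by algebra
  moreover have "(B * f 1) * (B * f 3) + w^2 * (A * f 5) * (A * f 9) - w^2 * (A * f 7) * (B * f 7) = 0"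
    unfolding products shifts using w5 by algebra
  moreover have "(A * f 1) * (A * f 5) + w^2 * (B * f 7) * (B * f 9) - (A * f 3) * (B * f 3) = 0"
    unfolding products shifts using w5 by algebra
  moreover have "(A * f 1) * (A * f 7) - (B * f 3) * (B * f 5) + w^2 * (A * f 9) * (B * f 9) = 0"
    unfolding products shifts using w5 by algebra
  ultimately show ?thesis
    by (simp add: power2_eq_square mult_ac)
qed

theorem proposition6p3:
  fixes z t :: complex
  assumes "Im t > 0"
  defines "w \<equiv> exp (2 * pi * \<i> / 5)"
    and "A \<equiv> theta_const 1 (1/5) t"
    and "B \<equiv> theta_const 1 (3/5) t"
    and "f \<equiv> (\<lambda>k::nat. theta_char (1/5) (real k / 5) z t)"
  shows "B^2 * f 1 * f 9 - A^2 * f 3 * f 7 + A * B * (f 5)^2 = 0 \<and>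
         w^2 * A^2 * f 3 * f 9 - w^2 * B^2 * f 5 * f 7 + A * B * (f 1)^2 = 0 \<and>
         B^2 * f 1 * f 3 + w^2 * A^2 * f 5 * f 9 - w^2 * A * B * (f 7)^2 = 0 \<and>
         A^2 * f 1 * f 5 + w^2 * B^2 * f 7 * f 9 - A * B * (f 3)^2 = 0 \<and>
         A^2 * f 1 * f 7 - B^2 * f 3 * f 5 + w^2 * A * B * (f 9)^2 = 0"
proof (rule quadratic_relations_from_products)
  show "w ^ 5 = 1"
    unfolding w_def by (rule exp_two_pi_i_div_5_pow_5)
  define P where "P j = theta_series (3/10) (2 * t) (z + of_int j / 5)" for j :: int
  define Q where "Q j = theta_series (4/5) (2 * t) (z + of_int j / 5)" for j :: int
  have A_eq: "A = theta_series (1/2) t (1/10)" and B_eq: "B = theta_series (1/2) t (3/10)"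
    and f_eq: "f k = theta_series (1/10) t (z + of_nat k / 10)" for k
    unfolding A_def B_def f_def theta_const_def theta_char_eq_theta_series by simp_all
  fix m :: nat
  have "z + of_nat (2 * m + 1) / 10 + 1/10 = z + of_int (int m + 1) / 5"
    and "z + of_nat (2 * m + 1) / 10 - 1/10 = z + of_int (int m) / 5"
    and "z + of_nat (2 * m + 1) / 10 + 3/10 = z + of_int (int m + 2) / 5"
    and "z + of_nat (2 * m + 1) / 10 - 3/10 = z + of_int (int m - 1) / 5"
    by (simp_all add: field_simps)
  then show "A * f (2 * m + 1) = P (int m + 1) * Q (int m) + Q (int m + 1) * P (int m)"
    and "B * f (2 * m + 1) = P (int m + 2) * Q (int m - 1) + Q (int m + 2) * P (int m - 1)"
    unfolding A_eq B_eq f_eq P_def Q_def by (simp_all only: theta_series_half_mult_tenth[OF assms(1)])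
  fix j :: int
  have "z + of_int (j + 5) / 5 = (z + of_int j / 5) + 1"
    by (simp add: field_simps)
  then show "P (j + 5) = - (w ^ 4) * P j" and "Q (j + 5) = w ^ 4 * Q j"
    unfolding P_def Q_def w_def
    by (simp_all only: theta_series_three_tenths_arg_add_one theta_series_four_fifths_arg_add_one)
qed

end
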